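(* Let $N\ge1$, $M=N$, and let $w_{mn}=N^{-1/2}\exp(-2\pi j\,mn/N)$ for $0\le m,n<N$ (the unitary discrete Fourier kernel, corresponding to infinite propagation distance). Suppose the targets are attainable: there exists $\boldsymbol C\in(\mathbb{C}\setminus\{0\})^N$ with $|i_m|^2=|p_m(\boldsymbol C)|^2$ for all $m$. Then for every $\boldsymbol c\in(\mathbb{C}\setminus\{0\})^N$ (in particular every iterate $\boldsymbol c[\tau]$ of the Wirtinger flow, regardless of the initial value) and every $n$, $$\Big|\frac{\partial L}{\partial\bar c_n}(\boldsymbol c)\Big|\le\frac{1}{|c_n|}.$$
   Context: Setup (WFCF). $j$ denotes the imaginary unit. For $\boldsymbol c=(c_0,\dots,c_{N-1})\in(\mathbb{C}\setminus\{0\})^N$ define $h_n(c_n)=c_n/|c_n|$, $p_m(\boldsymbol c)=\sum_{n=0}^{N-1}w_{mn}h_n(c_n)$, and the loss $L(\boldsymbol c)=\frac{1}{8N^2}\sum_{m=0}^{M-1}\big(|p_m(\boldsymbol c)|^2-|i_m|^2\big)^2$, where $|i_m|^2\ge0$ are given target values. Writing $c_n=a_n+jb_n$ with $a_n,b_n$ real, the Wirtinger derivative of a (real- or complex-valued) function $f$ with respect to $\bar c_n$ is $\frac{\partial f}{\partial \bar c_n}=\frac12\big(\frac{\partial f}{\partial a_n}+j\frac{\partial f}{\partial b_n}\big)$. The Wirtinger flow iteration is $c_n[\tau+1]=c_n[\tau]-\alpha\frac{\partial L}{\partial\bar c_n}(\boldsymbol c[\tau])$ with a real learning rate $\alpha>0$.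 *)

theory Defs
  imports "HOL-Analysis.Analysis"
begin

definition hphase :: "complex \<Rightarrow> complex" where
  "hphase z = z / complex_of_real (cmod z)"

definition pfield :: "(nat \<Rightarrow> nat \<Rightarrow> complex) \<Rightarrow> nat \<Rightarrow> (nat \<Rightarrow> complex) \<Rightarrow> nat \<Rightarrow> complex" where
  "pfield w N c m = (\<Sum>n<N. w m n * hphase (c n))"

definition loss :: "(nat \<Rightarrow> nat \<Rightarrow> complex) \<Rightarrow> nat \<Rightarrow> nat \<Rightarrow> (nat \<Rightarrow> complex) \<Rightarrow> (nat \<Rightarrow> complex) \<Rightarrow> real" where
  "loss w N M i c = 1 / (8 * (real N)^2) *
     (\<Sum>m<M. ((cmod (pfield w N c m))^2 - (cmod (i m))^2)^2)"

text \<open>Wirtinger derivative w.r.t. conj(c_n): (1/2)(dF/da_n + j dF/db_n), where c_n = a_n + j b_n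
  and the partial derivatives are ordinary real derivatives along the coordinate directions.\<close>
definition wirtinger_conj :: "((nat \<Rightarrow> complex) \<Rightarrow> real) \<Rightarrow> (nat \<Rightarrow> complex) \<Rightarrow> nat \<Rightarrow> complex" where
  "wirtinger_conj f c n =
     (1/2) * (complex_of_real (deriv (\<lambda>t::real. f (c(n := c n + complex_of_real t))) 0)
              + \<i> * complex_of_real (deriv (\<lambda>t::real. f (c(n := c n + \<i> * complex_of_real t))) 0))"

definition dft_kernel :: "nat \<Rightarrow> nat \<Rightarrow> nat \<Rightarrow> complex" where
  "dft_kernel N m n = exp (- 2 * complex_of_real pi * \<i> * of_nat m * of_nat n / of_nat N)
                       / complex_of_real (sqrt (real N))"

end

theory Submission
  imports Defs
begin

text \<open>The phase map z/|z| is 2/|c|-Lipschitz at any c \<noteq> 0, so moving c_n changes each field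
  p_m by at most 2 |w_mn| |z - c_n| / |c_n|. For the unitary DFT kernel the fields and, by
  attainability, the targets are bounded by \<surd>N, and the resulting Lipschitz constant of the
  loss in the coordinate c_n collapses to exactly 1/|c_n|. A function that is K-Lipschitz in c_n
  has both real partial derivatives bounded by K, hence a Wirtinger derivative of modulus at most K.\<close>

lemma norm_hphase_le: "cmod (hphase z) \<le> 1"
  unfolding hphase_def by (cases "z = 0") (simp_all add: norm_divide)

lemma norm_hphase_diff_le:
  assumes "c \<noteq> 0"
  shows "cmod (hphase z - hphase c) \<le> 2 * cmod (z - c) / cmod c"
proof (cases "z = 0")
  case True
  then show ?thesis using assms by (simp add: hphase_def norm_divide)
next
  case False
  have pos: "cmod z > 0" "cmod c > 0" using False assms by auto
  have split: "hphase z - hphase c = (z - c) / of_real (cmod c) + z * of_real (1 / cmod z - 1 / cmod c)"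
    using pos unfolding hphase_def by (simp add: field_simps)
  have "cmod (z * of_real (1 / cmod z - 1 / cmod c)) = cmod z * \<bar>1 / cmod z - 1 / cmod c\<bar>"
    by (simp only: norm_mult norm_of_real)
  also have "\<dots> = \<bar>cmod c - cmod z\<bar> / cmod c"
    using pos by (simp add: diff_frac_eq abs_div abs_mult)
  also have "\<dots> \<le> cmod (z - c) / cmod c"
    using pos norm_triangle_ineq3[of c z] by (simp add: divide_right_mono norm_minus_commute)
  finally have radial: "cmod (z * of_real (1 / cmod z - 1 / cmod c)) \<le> cmod (z - c) / cmod c" .
  have "cmod (hphase z - hphase c)
      \<le> cmod ((z - c) / of_real (cmod c)) + cmod (z * of_real (1 / cmod z - 1 / cmod c))"
    unfolding split by (rule norm_triangle_ineq)
  also have "\<dots> \<le> cmod (z - c) / cmod c + cmod (z - c) / cmod c"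
    using radial by (simp add: norm_divide)
  finally show ?thesis by simp
qed

lemma norm_pfield_le:
  assumes "\<And>m k. cmod (w m k) \<le> b"
  shows "cmod (pfield w N c m) \<le> N * b"
proof -
  have "0 \<le> b"
    using assms norm_ge_zero order_trans by blast
  then have "cmod (w m k * hphase (c k)) \<le> b" for k
    using mult_mono[OF assms[of m k] norm_hphase_le[of "c k"]] by (simp add: norm_mult)
  then have "(\<Sum>k<N. cmod (w m k * hphase (c k))) \<le> (\<Sum>k<N. b)"
    by (intro sum_mono)
  then show ?thesis
    unfolding pfield_def using norm_sum[of "\<lambda>k. w m k * hphase (c k)" "{..<N}"] by simp
qed

lemma pfield_fun_upd_diff:
  assumes "n < N"
  shows "pfield w N (c(n := z)) m - pfield w N c m = w m n * (hphase z - hphase (c n))"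
proof -
  have "pfield w N (c(n := z)) m - pfield w N c m
      = (\<Sum>k<N. if k = n then w m n * (hphase z - hphase (c n)) else 0)"
    unfolding pfield_def sum_subtractf[symmetric] by (rule sum.cong) (auto simp: algebra_simps)
  then show ?thesis using assms by simp
qed

lemma abs_squared_residual_diff_le:
  fixes P P' :: complex and I B :: real
  assumes "cmod P \<le> B" "cmod P' \<le> B" "0 \<le> I" "I \<le> B\<^sup>2"
  shows "\<bar>((cmod P')\<^sup>2 - I)\<^sup>2 - ((cmod P)\<^sup>2 - I)\<^sup>2\<bar> \<le> 4 * B^3 * cmod (P' - P)"
proof -
  have B0: "0 \<le> B" using assms(1) norm_ge_zero order_trans by blast
  have "(cmod P')\<^sup>2 - (cmod P)\<^sup>2 = (cmod P' - cmod P) * (cmod P' + cmod P)"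
    by (simp add: power2_eq_square algebra_simps)
  then have "\<bar>(cmod P')\<^sup>2 - (cmod P)\<^sup>2\<bar> = \<bar>cmod P' - cmod P\<bar> * (cmod P' + cmod P)"
    by (simp add: abs_mult)
  also have "\<dots> \<le> cmod (P' - P) * (2 * B)"
    using assms(1,2) norm_triangle_ineq3[of P' P] by (intro mult_mono) auto
  finally have diff: "\<bar>(cmod P')\<^sup>2 - (cmod P)\<^sup>2\<bar> \<le> cmod (P' - P) * (2 * B)" .
  have "(cmod P')\<^sup>2 \<le> B\<^sup>2" "(cmod P)\<^sup>2 \<le> B\<^sup>2"
    using assms(1,2) by (simp_all add: power_mono)
  moreover have "0 \<le> (cmod P')\<^sup>2" "0 \<le> (cmod P)\<^sup>2"
    by simp_all
  ultimately have sum: "\<bar>(cmod P')\<^sup>2 + (cmod P)\<^sup>2 - 2 * I\<bar> \<le> 2 * B\<^sup>2"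
    using assms(3,4) by linarith
  have "((cmod P')\<^sup>2 - I)\<^sup>2 - ((cmod P)\<^sup>2 - I)\<^sup>2
      = ((cmod P')\<^sup>2 - (cmod P)\<^sup>2) * ((cmod P')\<^sup>2 + (cmod P)\<^sup>2 - 2 * I)"
    by (simp add: power2_eq_square algebra_simps)
  then have "\<bar>((cmod P')\<^sup>2 - I)\<^sup>2 - ((cmod P)\<^sup>2 - I)\<^sup>2\<bar>
      = \<bar>(cmod P')\<^sup>2 - (cmod P)\<^sup>2\<bar> * \<bar>(cmod P')\<^sup>2 + (cmod P)\<^sup>2 - 2 * I\<bar>"
    by (simp only: abs_mult)
  also have "\<dots> \<le> (cmod (P' - P) * (2 * B)) * (2 * B\<^sup>2)"
    using B0 by (intro mult_mono[OF diff sum]) simp_all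
  also have "\<dots> = 4 * B^3 * cmod (P' - P)"
    by (simp add: power2_eq_square power3_eq_cube mult_ac)
  finally show ?thesis .
qed

lemma loss_fun_upd_Lipschitz:
  assumes kernel: "\<And>m k. cmod (w m k) \<le> b"
    and targets: "\<And>m. m < M \<Longrightarrow> (cmod (i m))\<^sup>2 \<le> (N * b)\<^sup>2"
    and "c n \<noteq> 0" "n < N"
  shows "\<bar>loss w N M i (c(n := z)) - loss w N M i c\<bar> \<le> real M * real N * b^4 * (cmod (z - c n) / cmod (c n))"
proof -
  define B where "B = N * b"
  define d where "d = cmod (z - c n) / cmod (c n)"
  define T where "T m = ((cmod (pfield w N (c(n := z)) m))\<^sup>2 - (cmod (i m))\<^sup>2)\<^sup>2
      - ((cmod (pfield w N c m))\<^sup>2 - (cmod (i m))\<^sup>2)\<^sup>2" for m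
  have b0: "0 \<le> b" using kernel norm_ge_zero order_trans by blast
  have summand: "\<bar>T m\<bar> \<le> 8 * B^3 * b * d" if "m < M" for m
  proof -
    have field_step: "cmod (pfield w N (c(n := z)) m - pfield w N c m) \<le> b * (2 * d)"
      unfolding pfield_fun_upd_diff[OF \<open>n < N\<close>] norm_mult d_def
      using kernel norm_hphase_diff_le[OF \<open>c n \<noteq> 0\<close>, of z] b0 by (intro mult_mono) auto
    have "\<bar>T m\<bar> \<le> 4 * B^3 * cmod (pfield w N (c(n := z)) m - pfield w N c m)"
      unfolding T_def B_def
      using norm_pfield_le[OF kernel] targets[OF that] by (intro abs_squared_residual_diff_le) auto
    also have "\<dots> \<le> 4 * B^3 * (b * (2 * d))"
      using field_step b0 by (intro mult_left_mono) (simp_all add: B_def)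
    finally show ?thesis by simp
  qed
  have "\<bar>loss w N M i (c(n := z)) - loss w N M i c\<bar> = \<bar>\<Sum>m<M. T m\<bar> / (8 * (real N)\<^sup>2)"
    unfolding loss_def T_def sum_subtractf by (simp add: abs_div flip: diff_divide_distrib)
  also have "\<dots> \<le> (\<Sum>m<M. 8 * B^3 * b * d) / (8 * (real N)\<^sup>2)"
  proof (rule divide_right_mono)
    show "\<bar>\<Sum>m<M. T m\<bar> \<le> (\<Sum>m<M. 8 * B^3 * b * d)"
      using sum_abs[of T "{..<M}"] sum_mono[of "{..<M}" "\<lambda>m. \<bar>T m\<bar>" "\<lambda>m. 8 * B^3 * b * d"] summand
      by (meson lessThan_iff order_trans)
  qed simp
  also have "\<dots> = real M * real N * b^4 * d"
    using \<open>n < N\<close> by (simp add: B_def power2_eq_square power3_eq_cube power4_eq_xxxx field_simps)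
  finally show ?thesis unfolding d_def .
qed

lemma hphase_line_differentiable:
  assumes "c \<noteq> 0"
  shows "(\<lambda>t::real. hphase (c + u * of_real t)) differentiable (at 0)"
proof -
  have of_real: "(\<lambda>t::real. complex_of_real t) differentiable (at x)" for x
    by (rule differentiableI[OF has_derivative_of_real[OF has_derivative_ident]])
  have line: "(\<lambda>t::real. c + u * of_real t) differentiable (at 0)"
    using of_real by (intro differentiable_add differentiable_mult differentiable_const) auto
  have "norm differentiable (at (c + u * of_real (0::real)))"
    using assms by simp
  from differentiable_compose[OF this line]
  have "(\<lambda>t::real. cmod (c + u * of_real t)) differentiable (at 0)" .
  from differentiable_compose[OF of_real this]
  have "(\<lambda>t::real. complex_of_real (cmod (c + u * of_real t))) differentiable (at 0)" .
  then show ?thesis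
    unfolding hphase_def using assms by (intro differentiable_divide[OF line]) simp_all
qed

lemma loss_line_differentiable:
  assumes "c n \<noteq> 0"
  shows "(\<lambda>t::real. loss w N M i (c(n := c n + u * of_real t))) differentiable (at 0)"
proof -
  have "(\<lambda>t::real. w m k * hphase ((c(n := c n + u * of_real t)) k)) differentiable (at 0)" for m k
    using hphase_line_differentiable[OF assms, of u] by (cases "k = n") simp_all
  then have "(\<lambda>t::real. pfield w N (c(n := c n + u * of_real t)) m) differentiable (at 0)" for m
    unfolding pfield_def by (intro differentiable_sum) auto
  from differentiable_compose[OF differentiable_sqnorm_at this]
  have "(\<lambda>t::real. (cmod (pfield w N (c(n := c n + u * of_real t)) m))\<^sup>2) differentiable (at 0)" for m
    by (simp add: o_def)
  then show ?thesis
    unfolding loss_def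
    by (intro differentiable_mult differentiable_const differentiable_sum differentiable_power
        differentiable_diff) auto
qed

lemma abs_deriv_le_if_Lipschitz_at:
  fixes f :: "real \<Rightarrow> real"
  assumes "f differentiable (at x)" "\<And>t. \<bar>f t - f x\<bar> \<le> K * \<bar>t - x\<bar>"
  shows "\<bar>deriv f x\<bar> \<le> K"
proof -
  have "(f has_real_derivative deriv f x) (at x)"
    using assms(1) DERIV_deriv_iff_real_differentiable by blast
  then have "((\<lambda>h. \<bar>(f (x + h) - f x) / h\<bar>) \<longlongrightarrow> \<bar>deriv f x\<bar>) (at 0)"
    unfolding DERIV_def by (rule tendsto_rabs)
  moreover have "\<forall>\<^sub>F h in at 0. \<bar>(f (x + h) - f x) / h\<bar> \<le> K"
    unfolding eventually_at_filter
    using assms(2)[of "x + _"] by (intro always_eventually) (simp add: abs_div pos_divide_le_eq)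
  ultimately show ?thesis by (rule tendsto_upperbound) simp
qed

lemma norm_wirtinger_conj_le_if_Lipschitz:
  assumes "\<And>u. (\<lambda>t::real. f (c(n := c n + u * of_real t))) differentiable (at 0)"
    and "\<And>z. \<bar>f (c(n := z)) - f c\<bar> \<le> K * cmod (z - c n)"
  shows "cmod (wirtinger_conj f c n) \<le> K"
proof -
  have partial: "\<bar>deriv (\<lambda>t::real. f (c(n := c n + u * of_real t))) 0\<bar> \<le> K" if "cmod u = 1" for u
    using assms(1) assms(2)[of "c n + u * of_real _"] that
    by (intro abs_deriv_le_if_Lipschitz_at) (simp_all add: norm_mult)
  define D1 where "D1 = deriv (\<lambda>t. f (c(n := c n + 1 * of_real t))) 0"
  define Di where "Di = deriv (\<lambda>t. f (c(n := c n + \<i> * of_real t))) 0"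
  have "cmod (wirtinger_conj f c n) = cmod (of_real D1 + \<i> * of_real Di) / 2"
    unfolding wirtinger_conj_def D1_def Di_def by (simp add: norm_mult)
  also have "\<dots> \<le> (\<bar>D1\<bar> + \<bar>Di\<bar>) / 2"
    using norm_triangle_ineq[of "of_real D1" "\<i> * of_real Di"] by (simp add: norm_mult)
  also have "\<dots> \<le> K"
    using partial[of 1] partial[of \<i>] unfolding D1_def Di_def by simp
  finally show ?thesis .
qed

lemma norm_dft_kernel: "cmod (dft_kernel N m k) = 1 / sqrt (real N)"
proof -
  have "exp (- 2 * complex_of_real pi * \<i> * of_nat m * of_nat k / of_nat N)
      = exp (\<i> * complex_of_real (- 2 * pi * m * k / N))"
    by (simp add: field_simps)
  then show ?thesis
    unfolding dft_kernel_def by (simp add: norm_divide norm_exp_i_times)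
qed

theorem theorem2:
  fixes N :: nat and i :: "nat \<Rightarrow> complex" and C c :: "nat \<Rightarrow> complex" and n :: nat
  assumes "N \<ge> 1"
    and "\<forall>k<N. C k \<noteq> 0"
    and "\<forall>m<N. (cmod (i m))^2 = (cmod (pfield (dft_kernel N) N C m))^2"
    and "\<forall>k<N. c k \<noteq> 0"
    and "n < N"
  shows "cmod (wirtinger_conj (loss (dft_kernel N) N N i) c n) \<le> 1 / cmod (c n)"
proof (rule norm_wirtinger_conj_le_if_Lipschitz)
  define b where "b = 1 / sqrt (real N)"
  have kernel: "cmod (dft_kernel N m k) \<le> b" for m k
    by (simp add: b_def norm_dft_kernel)
  have targets: "(cmod (i m))\<^sup>2 \<le> (N * b)\<^sup>2" if "m < N" for m
    using assms(3) that norm_pfield_le[OF kernel] by (simp add: power_mono)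
  have "b\<^sup>2 = 1 / real N"
    by (simp add: b_def power_divide)
  then have scale: "real N * real N * b^4 = 1"
    using assms(1) by (simp add: power4_eq_xxxx flip: power2_eq_square)
  show "\<bar>loss (dft_kernel N) N N i (c(n := z)) - loss (dft_kernel N) N N i c\<bar>
      \<le> 1 / cmod (c n) * cmod (z - c n)" for z
  proof -
    have "\<bar>loss (dft_kernel N) N N i (c(n := z)) - loss (dft_kernel N) N N i c\<bar>
        \<le> real N * real N * b^4 * (cmod (z - c n) / cmod (c n))"
      using assms(4,5) by (intro loss_fun_upd_Lipschitz[OF kernel targets]) auto
    then show ?thesis
      unfolding scale by simp
  qed
  show "(\<lambda>t::real. loss (dft_kernel N) N N i (c(n := c n + u * of_real t))) differentiable (at 0)" for u
    using assms(4,5) by (intro loss_line_differentiable) simp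
qed

end
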